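(* Let $m\ge2$, $n\ge1$, $f_i:\mathbb{R}^n\to\mathbb{R}$ ($i=1,\dots,m$) smooth, $\mathbf{r}\in\mathbb{R}^n$, and $\mathcal{G}$ an undirected graph on $\{1,\dots,m\}$ with Laplacian $\mathbf{L}$. Assume each $f_i$ has $L^g_{f_i}$-Lipschitz gradient and $L^H_{f_i}$-Lipschitz Hessian, each $f_i$ is coercive, and $\mathcal{G}$ is connected. Let $L_F^g=\max_iL^g_{f_i}$. Let $\boldsymbol\theta^0\in\mathbb{R}^{mn}$ satisfy $(\mathbf{1}_m^\top\otimes\mathbf{I}_n)\boldsymbol\theta^0=\mathbf{r}$. Then for any fixed step-size $0<\alpha\le\frac{1}{\|\sqrt{\mathbf{L}}\|^2L_F^g}$, the sequence generated by $\boldsymbol\theta^{k+1}=\boldsymbol\theta^k-\alpha\hat{\mathbf{L}}\nabla F(\boldsymbol\theta^k)$ satisfies $(\mathbf{1}_m^\top\otimes\mathbf{I}_n)\boldsymbol\theta^k=\mathbf{r}$ for all $k\ge0$ and $$\lim_{k\to\infty}\|\sqrt{\hat{\mathbf{L}}}\,\nabla F(\boldsymbol\theta^k)\|=0.$$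
   Context: $\boldsymbol\theta=[\boldsymbol\theta_1^\top,\dots,\boldsymbol\theta_m^\top]^\top\in\mathbb{R}^{mn}$, $F(\boldsymbol\theta)=\sum_i f_i(\boldsymbol\theta_i)$, $\nabla F$ the stacked gradient. $\sqrt{\mathbf{L}}$ is the unique symmetric positive semidefinite square root of $\mathbf{L}$; $\hat{\mathbf{L}}=\mathbf{L}\otimes\mathbf{I}_n$, $\sqrt{\hat{\mathbf{L}}}=\sqrt{\mathbf{L}}\otimes\mathbf{I}_n$; $\|\cdot\|$ on matrices is the spectral norm. *)

theory Defs
  imports "HOL-Analysis.Analysis"
begin

text \<open>C-infinity smoothness of a real-valued function on R^n: it is differentiable
  everywhere and all its first partial derivatives are again smooth (greatest fixed point,
  i.e. partial derivatives of every order exist).\<close>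
coinductive smooth_fun :: "(real^'n \<Rightarrow> real) \<Rightarrow> bool" where
  "(\<forall>x. f differentiable (at x)) \<Longrightarrow>
   (\<forall>j. smooth_fun (\<lambda>x. frechet_derivative f (at x) (axis j 1))) \<Longrightarrow> smooth_fun f"

definition coercive :: "(real^'n \<Rightarrow> real) \<Rightarrow> bool" where
  "coercive f \<longleftrightarrow> filterlim f at_top at_infinity"

definition laplacian :: "('m::finite \<Rightarrow> 'm \<Rightarrow> bool) \<Rightarrow> real^'m^'m" where
  "laplacian E = (\<chi> i j. if i = j then real (card {k. E i k}) else if E i j then -1 else 0)"

definition undirected_simple_graph :: "('m \<Rightarrow> 'm \<Rightarrow> bool) \<Rightarrow> bool" where
  "undirected_simple_graph E \<longleftrightarrow> (\<forall>i j. E i j \<longrightarrow> E j i) \<and> (\<forall>i. \<not> E i i)"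

definition graph_connected :: "('m \<Rightarrow> 'm \<Rightarrow> bool) \<Rightarrow> bool" where
  "graph_connected E \<longleftrightarrow> (\<forall>i j. E\<^sup>*\<^sup>* i j)"

definition psd :: "real^'m^'m \<Rightarrow> bool" where
  "psd S \<longleftrightarrow> transpose S = S \<and> (\<forall>x. 0 \<le> x \<bullet> (S *v x))"

definition psd_sqrt :: "real^'m^'m \<Rightarrow> real^'m^'m" where
  "psd_sqrt A = (THE S. psd S \<and> S ** S = A)"

definition spec_norm :: "real^'m^'k \<Rightarrow> real" where
  "spec_norm A = onorm (\<lambda>x. A *v x)"

text \<open>Action of a Kronecker product (M \<otimes> I_n) on a stacked vector: node i gets sum_j M_ij v_j.\<close>
definition kron_I :: "real^'m^'m \<Rightarrow> real^'n^'m \<Rightarrow> real^'n^'m" where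
  "kron_I M v = (\<chi> i. \<Sum>j\<in>UNIV. M $ i $ j *\<^sub>R v $ j)"

end

theory Submission
  imports Defs
begin

text \<open>The blocks of \<theta>(k) keep summing to r because every column of the Laplacian L sums to
  zero. For convergence write L = S S with S = sqrt L and u(k) = (S \<otimes> I) \<nabla>F(\<theta>(k)). The
  step \<theta>(k+1) - \<theta>(k) = -\<alpha> (S \<otimes> I) u(k) has inner product -\<alpha> |u(k)|^2 with \<nabla>F(\<theta>(k)) and
  length at most \<alpha> |S| |u(k)|, so the descent lemma for the Lipschitz gradient of
  F = \<Sum>i. f i gives F(\<theta>(k+1)) \<le> F(\<theta>(k)) - \<alpha>/2 |u(k)|^2 under the step-size condition.
  Coercivity bounds F below, hence \<Sum>k. |u(k)|^2 is finite and u(k) \<rightarrow> 0. Existence and uniqueness of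
  sqrt L come from the spectral theorem.\<close>

section \<open>Spectral theorem for real symmetric matrices\<close>

lemma symmetric_matrix_inner_commute:
  fixes A :: "real^'n^'n"
  assumes "transpose A = A"
  shows "(A *v x) \<bullet> y = x \<bullet> (A *v y)"
  by (metis assms dot_lmul_matrix inner_commute vector_transpose_matrix)

lemma nonneg_quadratic_imp_linear_coeff_zero:
  fixes a c :: real
  assumes "\<And>t. 0 \<le> 2 * t * a + t\<^sup>2 * c"
  shows "a = 0"
proof (rule ccontr)
  assume a: "a \<noteq> 0"
  define s where "s = 1 / (\<bar>c\<bar> + 1)"
  have s: "0 < s" "s * c < 1"
    unfolding s_def by (auto simp: field_simps abs_if split: if_splits)
  have "0 \<le> 2 * (- a * s) * a + (- a * s)\<^sup>2 * c" using assms by blast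
  also have "\<dots> = a\<^sup>2 * s * (s * c - 2)" by (simp add: power2_eq_square algebra_simps)
  finally have "0 \<le> a\<^sup>2 * s * (s * c - 2)" .
  moreover have "0 < a\<^sup>2 * s" using a s by simp
  ultimately show False using s by (simp add: zero_le_mult_iff)
qed

lemma symmetric_quadratic_form_add:
  fixes A :: "real^'n^'n"
  assumes "transpose A = A"
  shows "(v + t *\<^sub>R w) \<bullet> (A *v (v + t *\<^sub>R w)) =
    v \<bullet> (A *v v) + 2 * t * (w \<bullet> (A *v v)) + t\<^sup>2 * (w \<bullet> (A *v w))"
proof -
  have "v \<bullet> (A *v w) = w \<bullet> (A *v v)"
    using symmetric_matrix_inner_commute[OF assms, of w v] by (simp add: inner_commute)
  then show ?thesis
    by (simp add: matrix_vector_right_distrib matrix_vector_mult_scaleR inner_add_left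
        inner_add_right power2_eq_square algebra_simps)
qed

lemma psd_quadratic_form_eq_0_imp_mult_eq_0:
  fixes S :: "real^'n^'n"
  assumes psd: "psd S" and "x \<bullet> (S *v x) = 0"
  shows "S *v x = 0"
proof -
  have sym: "transpose S = S" using psd unfolding psd_def by simp
  have "0 \<le> 2 * t * ((S *v x) \<bullet> (S *v x)) + t\<^sup>2 * ((S *v x) \<bullet> (S *v (S *v x)))" for t
  proof -
    have "0 \<le> (x + t *\<^sub>R (S *v x)) \<bullet> (S *v (x + t *\<^sub>R (S *v x)))"
      using psd unfolding psd_def by blast
    then show ?thesis using symmetric_quadratic_form_add[OF sym] assms(2) by simp
  qed
  then have "(S *v x) \<bullet> (S *v x) = 0" by (rule nonneg_quadratic_imp_linear_coeff_zero)
  then show ?thesis by simp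
qed

lemma symmetric_matrix_rayleigh_maximiser_eigenvector:
  fixes A :: "real^'n^'n"
  assumes sym: "transpose A = A" and V: "subspace V" and inv: "\<And>x. x \<in> V \<Longrightarrow> A *v x \<in> V"
    and v: "v \<in> V" "v \<bullet> v = 1"
    and max: "\<And>x. x \<in> V \<Longrightarrow> x \<bullet> (A *v x) \<le> (v \<bullet> (A *v v)) * (x \<bullet> x)"
  shows "A *v v = (v \<bullet> (A *v v)) *\<^sub>R v"
proof -
  define \<mu> where "\<mu> = v \<bullet> (A *v v)"
  define w where "w = A *v v - \<mu> *\<^sub>R v"
  have wV: "w \<in> V" unfolding w_def using inv v V by (simp add: subspace_diff subspace_scale)
  have "0 \<le> 2 * t * (- (w \<bullet> w)) + t\<^sup>2 * (\<mu> * (w \<bullet> w) - w \<bullet> (A *v w))" for t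
  proof -
    have "(v + t *\<^sub>R w) \<bullet> (A *v (v + t *\<^sub>R w)) \<le> \<mu> * ((v + t *\<^sub>R w) \<bullet> (v + t *\<^sub>R w))"
      unfolding \<mu>_def using max wV v V by (simp add: subspace_add subspace_scale)
    moreover have "w \<bullet> (A *v v) = w \<bullet> w + \<mu> * (v \<bullet> w)"
      unfolding w_def by (simp add: inner_diff_left inner_diff_right inner_commute algebra_simps)
    ultimately show ?thesis
      using v(2) unfolding symmetric_quadratic_form_add[OF sym] \<mu>_def[symmetric]
      by (simp add: inner_add_left inner_add_right inner_commute power2_eq_square algebra_simps)
  qed
  then have "- (w \<bullet> w) = 0" by (rule nonneg_quadratic_imp_linear_coeff_zero)
  then show ?thesis unfolding w_def \<mu>_def by simp
qed

lemma symmetric_matrix_invariant_subspace_eigenvector: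
  fixes A :: "real^'n^'n"
  assumes sym: "transpose A = A" and V: "subspace V" and inv: "\<And>x. x \<in> V \<Longrightarrow> A *v x \<in> V"
    and ne: "V \<noteq> {0}"
  shows "\<exists>v\<in>V. norm v = 1 \<and> A *v v = (v \<bullet> (A *v v)) *\<^sub>R v"
proof -
  define K where "K = V \<inter> sphere 0 1"
  define q where "q x = x \<bullet> (A *v x)" for x
  have "compact K"
    unfolding K_def using closed_subspace[OF V] by (simp add: closed_Int_compact)
  obtain z where "z \<in> V" "z \<noteq> 0" using ne V subspace_0 by blast
  then have "z /\<^sub>R norm z \<in> K" unfolding K_def using V by (simp add: subspace_scale)
  then have "K \<noteq> {}" by blast
  moreover have "continuous_on K q"
    unfolding q_def by (intro continuous_intros matrix_vector_mult_linear_continuous_on)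
  ultimately obtain v where v: "v \<in> K" and vmax: "\<And>x. x \<in> K \<Longrightarrow> q x \<le> q v"
    using continuous_attains_sup[OF \<open>compact K\<close>] by blast
  have vV: "v \<in> V" and nv: "norm v = 1" using v unfolding K_def by auto
  have "q x \<le> q v * (x \<bullet> x)" if "x \<in> V" for x
  proof (cases "x = 0")
    case False
    have "x /\<^sub>R norm x \<in> K" unfolding K_def using that False V by (simp add: subspace_scale)
    then have "q (x /\<^sub>R norm x) \<le> q v" using vmax by blast
    moreover have "q (x /\<^sub>R norm x) = q x / (x \<bullet> x)"
      by (simp add: q_def matrix_vector_mult_scaleR dot_square_norm power2_eq_square field_simps)
    ultimately show ?thesis using False by (simp add: divide_le_eq mult.commute)
  qed (simp add: q_def)
  then have "A *v v = q v *\<^sub>R v"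
    using symmetric_matrix_rayleigh_maximiser_eigenvector[OF sym V inv vV] nv
    unfolding q_def by (simp add: dot_square_norm)
  then show ?thesis using vV nv unfolding q_def by blast
qed

lemma dim_subspace_inter_hyperplane:
  fixes V :: "'a::euclidean_space set"
  assumes V: "subspace V" and v: "v \<in> V" "v \<bullet> v = 1"
  shows "dim V = dim (V \<inter> {x. v \<bullet> x = 0}) + 1"
proof -
  define W where "W = V \<inter> {x. v \<bullet> x = 0}"
  have "subspace W"
    unfolding W_def using V subspace_hyperplane by (rule subspace_inter)
  have "V = span (insert v W)"
  proof
    show "span (insert v W) \<subseteq> V"
      using v V unfolding W_def by (intro span_minimal) auto
    show "V \<subseteq> span (insert v W)"
    proof
      fix x assume x: "x \<in> V"
      have "x - (v \<bullet> x) *\<^sub>R v \<in> W"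
        unfolding W_def using x v V by (simp add: subspace_diff subspace_scale inner_diff_right)
      then have "x - (v \<bullet> x) *\<^sub>R v + (v \<bullet> x) *\<^sub>R v \<in> span (insert v W)"
        by (intro span_add) (simp_all add: span_base span_scale)
      then show "x \<in> span (insert v W)" by simp
    qed
  qed
  moreover have "v \<notin> W" using v unfolding W_def by auto
  then have "v \<notin> span W" using \<open>subspace W\<close> by (metis span_eq_iff)
  ultimately show ?thesis unfolding W_def[symmetric] by (simp add: dim_span dim_insert)
qed

lemma symmetric_matrix_invariant_subspace_orthonormal_eigenvectors:
  fixes A :: "real^'n^'n"
  assumes sym: "transpose A = A"
  shows "subspace V \<Longrightarrow> (\<forall>x\<in>V. A *v x \<in> V) \<Longrightarrow> dim V = d \<Longrightarrow>
    \<exists>B\<subseteq>V. finite B \<and> card B = d \<and> pairwise orthogonal B \<and>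
        (\<forall>b\<in>B. norm b = 1 \<and> A *v b = (b \<bullet> (A *v b)) *\<^sub>R b)"
proof (induction d arbitrary: V)
  case 0
  then show ?case by (intro exI[of _ "{}"]) auto
next
  case (Suc d)
  then have "V \<noteq> {0}" by auto
  then obtain v where vV: "v \<in> V" and nv: "norm v = 1" and ev: "A *v v = (v \<bullet> (A *v v)) *\<^sub>R v"
    using symmetric_matrix_invariant_subspace_eigenvector[OF sym Suc.prems(1)] Suc.prems(2) by blast
  have vv: "v \<bullet> v = 1" using nv by (simp add: dot_square_norm)
  define W where "W = V \<inter> {x. v \<bullet> x = 0}"
  have "subspace W"
    unfolding W_def using Suc.prems(1) subspace_hyperplane by (rule subspace_inter)
  moreover have "\<forall>x\<in>W. A *v x \<in> W"
  proof
    fix x assume x: "x \<in> W"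
    have "v \<bullet> (A *v x) = (A *v v) \<bullet> x" using symmetric_matrix_inner_commute[OF sym] by simp
    also have "\<dots> = 0" using x unfolding W_def by (subst ev) simp
    finally show "A *v x \<in> W" using x Suc.prems(2) unfolding W_def by auto
  qed
  moreover have "dim W = d"
    using dim_subspace_inter_hyperplane[OF Suc.prems(1) vV vv] Suc.prems(3) unfolding W_def by simp
  ultimately obtain B where B: "B \<subseteq> W" "finite B" "card B = d" "pairwise orthogonal B"
      "\<forall>b\<in>B. norm b = 1 \<and> A *v b = (b \<bullet> (A *v b)) *\<^sub>R b"
    using Suc.IH by blast
  moreover have "v \<notin> B" using B(1) vv unfolding W_def by auto
  moreover have "pairwise orthogonal (insert v B)"
    using B(1,4) unfolding pairwise_def W_def orthogonal_def by (auto simp: inner_commute)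
  ultimately show ?case
    using vV nv ev unfolding W_def by (intro exI[of _ "insert v B"]) auto
qed

definition orthonormal_eigenbasis :: "real^'n^'n \<Rightarrow> (real^'n) set \<Rightarrow> bool" where
  "orthonormal_eigenbasis A B \<longleftrightarrow> finite B \<and> pairwise orthogonal B \<and>
     (\<forall>b\<in>B. norm b = 1 \<and> A *v b = (b \<bullet> (A *v b)) *\<^sub>R b) \<and> (\<forall>x. x = (\<Sum>b\<in>B. (b \<bullet> x) *\<^sub>R b))"

lemma inner_orthonormal_sum:
  fixes B :: "(real^'n) set"
  assumes "finite B" "pairwise orthogonal B" "\<forall>b\<in>B. norm b = 1" "c \<in> B"
  shows "c \<bullet> (\<Sum>b\<in>B. f b *\<^sub>R b) = f c"
proof -
  have "c \<bullet> (\<Sum>b\<in>B. f b *\<^sub>R b) = (\<Sum>b\<in>B. if b = c then f c else 0)"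
    unfolding inner_sum_right
  proof (rule sum.cong)
    fix b assume "b \<in> B"
    then show "c \<bullet> f b *\<^sub>R b = (if b = c then f c else 0)"
      using assms(2-4) unfolding pairwise_def orthogonal_def
      by (auto simp: dot_square_norm inner_commute)
  qed simp
  then show ?thesis using assms(1,4) by simp
qed

lemma symmetric_matrix_orthonormal_eigenbasis:
  fixes A :: "real^'n^'n"
  assumes "transpose A = A"
  obtains B where "orthonormal_eigenbasis A B"
proof -
  obtain B where fB: "finite B" and cB: "card B = dim (UNIV :: (real^'n) set)"
    and oB: "pairwise orthogonal B" and eB: "\<forall>b\<in>B. norm b = 1 \<and> A *v b = (b \<bullet> (A *v b)) *\<^sub>R b"
    using symmetric_matrix_invariant_subspace_orthonormal_eigenvectors[OF assms subspace_UNIV]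
    by blast
  have "0 \<notin> B" using eB by force
  then have "independent B" using oB pairwise_orthogonal_independent by blast
  then have span: "span B = UNIV" using card_eq_dim[of B UNIV] fB cB by auto
  have "x = (\<Sum>b\<in>B. (b \<bullet> x) *\<^sub>R b)" for x
  proof -
    obtain c where x: "x = (\<Sum>b\<in>B. c b *\<^sub>R b)"
      using span span_finite[OF fB] by blast
    have "b \<bullet> x = c b" if "b \<in> B" for b
      unfolding x using inner_orthonormal_sum fB oB eB that by blast
    then show ?thesis by (simp add: x)
  qed
  then show thesis using that fB oB eB unfolding orthonormal_eigenbasis_def by blast
qed

section \<open>Square roots of positive semidefinite matrices\<close>

lemma outer_product_sum_mult_vector:
  fixes B :: "(real^'n) set"
  shows "(\<chi> i j. \<Sum>b\<in>B. c b * b $ i * b $ j) *v x = (\<Sum>b\<in>B. (c b * (b \<bullet> x)) *\<^sub>R b)"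
proof -
  have "(\<Sum>j\<in>UNIV. (\<Sum>b\<in>B. c b * b $ i * b $ j) * x $ j) = (\<Sum>b\<in>B. c b * (b \<bullet> x) * b $ i)" for i
  proof -
    have "(\<Sum>j\<in>UNIV. (\<Sum>b\<in>B. c b * b $ i * b $ j) * x $ j) = (\<Sum>b\<in>B. \<Sum>j\<in>UNIV. c b * b $ i * (b $ j * x $ j))"
      by (simp add: sum_distrib_right mult.assoc) (rule sum.swap)
    also have "\<dots> = (\<Sum>b\<in>B. c b * (b \<bullet> x) * b $ i)"
      by (simp add: inner_vec_def sum_distrib_left mult_ac)
    finally show ?thesis .
  qed
  then show ?thesis
    by (simp add: matrix_vector_mult_def vec_eq_iff sum_component)
qed

lemma psd_outer_product_sum:
  fixes B :: "(real^'n) set"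
  assumes "\<And>b. b \<in> B \<Longrightarrow> 0 \<le> c b"
  shows "psd (\<chi> i j. \<Sum>b\<in>B. c b * b $ i * b $ j)"
proof -
  let ?S = "\<chi> i j. \<Sum>b\<in>B. c b * b $ i * b $ j"
  have "transpose ?S = ?S"
    unfolding transpose_def by (simp add: vec_eq_iff mult_ac)
  moreover have "x \<bullet> (?S *v x) = (\<Sum>b\<in>B. c b * (b \<bullet> x)\<^sup>2)" for x
    unfolding outer_product_sum_mult_vector
    by (simp add: inner_sum_right inner_commute power2_eq_square mult_ac)
  ultimately show ?thesis
    unfolding psd_def using assms by (simp add: sum_nonneg)
qed

lemma psd_square_root_exists:
  fixes A :: "real^'n^'n"
  assumes psd: "psd A"
  obtains S where "psd S" "S ** S = A"
proof -
  obtain B where "orthonormal_eigenbasis A B"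
    using symmetric_matrix_orthonormal_eigenbasis psd unfolding psd_def by blast
  then have fB: "finite B" and oB: "pairwise orthogonal B" and nB: "\<forall>b\<in>B. norm b = 1"
    and eB: "\<And>b. b \<in> B \<Longrightarrow> A *v b = (b \<bullet> (A *v b)) *\<^sub>R b"
    and xB: "\<And>x. x = (\<Sum>b\<in>B. (b \<bullet> x) *\<^sub>R b)"
    unfolding orthonormal_eigenbasis_def by auto
  define c where "c b = sqrt (b \<bullet> (A *v b))" for b
  have cc: "c b * c b = b \<bullet> (A *v b)" if "b \<in> B" for b
    using psd unfolding c_def psd_def by simp
  define S :: "real^'n^'n" where "S = (\<chi> i j. \<Sum>b\<in>B. c b * b $ i * b $ j)"
  have Sx: "S *v x = (\<Sum>b\<in>B. (c b * (b \<bullet> x)) *\<^sub>R b)" for x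
    unfolding S_def by (rule outer_product_sum_mult_vector)
  have "psd S"
    unfolding S_def c_def by (rule psd_outer_product_sum) (use psd in \<open>simp add: psd_def\<close>)
  have "S *v (S *v x) = A *v x" for x
  proof -
    have "S *v (S *v x) = (\<Sum>b\<in>B. (c b * (c b * (b \<bullet> x))) *\<^sub>R b)"
      unfolding Sx[of "S *v x"] unfolding Sx
      using inner_orthonormal_sum[OF fB oB nB] by (intro sum.cong) auto
    also have "\<dots> = (\<Sum>b\<in>B. (b \<bullet> x) *\<^sub>R (A *v b))"
    proof (rule sum.cong)
      fix b assume b: "b \<in> B"
      have "c b * (c b * (b \<bullet> x)) = (b \<bullet> x) * (b \<bullet> (A *v b))"
        using cc[OF b] by (metis mult.assoc mult.commute)
      then show "(c b * (c b * (b \<bullet> x))) *\<^sub>R b = (b \<bullet> x) *\<^sub>R (A *v b)"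
        by (subst eB[OF b]) simp
    qed simp
    also have "\<dots> = A *v (\<Sum>b\<in>B. (b \<bullet> x) *\<^sub>R b)"
      by (simp add: vec.sum matrix_vector_mult_scaleR)
    finally show ?thesis using xB[of x] by simp
  qed
  then have "S ** S = A" unfolding matrix_eq by (simp add: matrix_vector_mul_assoc)
  with \<open>psd S\<close> show thesis by (rule that)
qed

lemma psd_squares_eq_imp_eigenvector_of_diff_in_kernel:
  fixes S T :: "real^'n^'n"
  assumes S: "psd S" and T: "psd T" and eq: "S ** S = T ** T"
    and nb: "norm b = 1" and eb: "(S - T) *v b = \<mu> *\<^sub>R b"
  shows "(S - T) *v b = 0"
proof (cases "\<mu> = 0")
  case False
  have sS: "transpose S = S" and sT: "transpose T = T" using S T unfolding psd_def by auto
  have bb: "b \<bullet> b = 1" using nb by (simp add: dot_square_norm)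
  have SbT: "S *v b = T *v b + \<mu> *\<^sub>R b"
    using eb by (simp add: matrix_vector_mult_diff_rdistrib algebra_simps)
  have "(S *v b) \<bullet> (S *v b) = b \<bullet> ((S ** S) *v b)"
    using symmetric_matrix_inner_commute[OF sS] by (simp add: matrix_vector_mul_assoc)
  also have "\<dots> = (T *v b) \<bullet> (T *v b)"
    using symmetric_matrix_inner_commute[OF sT] eq by (simp add: matrix_vector_mul_assoc)
  finally have "\<mu> * (2 * (b \<bullet> (T *v b)) + \<mu>) = 0"
    unfolding SbT using bb by (simp add: inner_add_left inner_add_right inner_commute algebra_simps)
  moreover have "\<mu> = b \<bullet> (S *v b) - b \<bullet> (T *v b)"
    using eb bb by (metis inner_diff_right inner_scaleR_right matrix_vector_mult_diff_rdistrib mult_1_right)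
  moreover have "0 \<le> b \<bullet> (S *v b)" "0 \<le> b \<bullet> (T *v b)" using S T unfolding psd_def by auto
  ultimately have "b \<bullet> (S *v b) = 0" "b \<bullet> (T *v b) = 0" using False by auto
  then have "S *v b = 0" "T *v b = 0" using psd_quadratic_form_eq_0_imp_mult_eq_0 S T by blast+
  then show ?thesis by (simp add: matrix_vector_mult_diff_rdistrib)
qed (use eb in simp)

lemma psd_square_root_unique:
  fixes S T :: "real^'n^'n"
  assumes S: "psd S" and T: "psd T" and eq: "S ** S = T ** T"
  shows "S = T"
proof -
  have "transpose (S - T) = S - T"
    using S T unfolding psd_def transpose_def by (simp add: vec_eq_iff)
  then obtain B where B: "orthonormal_eigenbasis (S - T) B"
    using symmetric_matrix_orthonormal_eigenbasis by blast
  have kernel: "(S - T) *v b = 0" if "b \<in> B" for b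
    using B that psd_squares_eq_imp_eigenvector_of_diff_in_kernel[OF S T eq]
    unfolding orthonormal_eigenbasis_def by blast
  have "(S - T) *v x = 0" for x
  proof -
    have "(S - T) *v x = (S - T) *v (\<Sum>b\<in>B. (b \<bullet> x) *\<^sub>R b)"
      using B unfolding orthonormal_eigenbasis_def by (intro arg_cong[where f = "(*v) (S - T)"]) blast
    also have "\<dots> = 0"
      using kernel by (simp add: vec.sum matrix_vector_mult_scaleR)
    finally show ?thesis .
  qed
  then show ?thesis unfolding matrix_eq by (simp add: matrix_vector_mult_diff_rdistrib)
qed

lemma ex1_psd_square_root:
  assumes "psd A"
  shows "\<exists>!S. psd S \<and> S ** S = A"
proof -
  obtain S where "psd S" "S ** S = A" using psd_square_root_exists[OF assms] .
  then show ?thesis using psd_square_root_unique by blast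
qed

lemma
  assumes "psd A"
  shows psd_psd_sqrt: "psd (psd_sqrt A)" and psd_sqrt_mult_self: "psd_sqrt A ** psd_sqrt A = A"
  using theI'[OF ex1_psd_square_root[OF assms]] unfolding psd_sqrt_def by auto

section \<open>The graph Laplacian\<close>

lemma laplacian_nth:
  assumes "undirected_simple_graph E"
  shows "laplacian E $ i $ j = of_bool (i = j) * real (card {k. E i k}) - of_bool (E i j)"
  using assms unfolding laplacian_def undirected_simple_graph_def by simp

lemma laplacian_column_sum:
  assumes "undirected_simple_graph E"
  shows "(\<Sum>i\<in>UNIV. laplacian E $ i $ j) = 0"
proof -
  have "{i. E i j} = {i. E j i}" using assms unfolding undirected_simple_graph_def by blast
  then show ?thesis by (simp add: laplacian_nth[OF assms] sum_subtractf)
qed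

lemma laplacian_mult_vector_nth:
  assumes "undirected_simple_graph E"
  shows "(laplacian E *v x) $ i = (\<Sum>j\<in>UNIV. of_bool (E i j) * (x $ i - x $ j))"
proof -
  have "(\<Sum>j\<in>UNIV. of_bool (i = j) * real (card {k. E i k}) * x $ j) = real (card {k. E i k}) * x $ i"
    by (simp only: mult.assoc) simp
  then show ?thesis
    by (simp add: matrix_vector_mult_def laplacian_nth[OF assms] left_diff_distrib sum_subtractf)
qed

lemma laplacian_quadratic_form:
  assumes graph: "undirected_simple_graph E"
  shows "x \<bullet> (laplacian E *v x) = (\<Sum>i\<in>UNIV. \<Sum>j\<in>UNIV. of_bool (E i j) * (x $ i - x $ j)\<^sup>2) / 2"
proof -
  have sym: "E i j = E j i" for i j using graph unfolding undirected_simple_graph_def by blast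
  let ?e = "\<lambda>i j. of_bool (E i j) :: real"
  have "(\<Sum>i\<in>UNIV. \<Sum>j\<in>UNIV. ?e i j * (x $ i - x $ j)\<^sup>2) =
      (\<Sum>i\<in>UNIV. \<Sum>j\<in>UNIV. ?e i j * (x $ i * (x $ i - x $ j))) +
      (\<Sum>i\<in>UNIV. \<Sum>j\<in>UNIV. ?e j i * (x $ j * (x $ j - x $ i)))"
    by (simp add: sym power2_eq_square algebra_simps sum.distrib[symmetric])
  also have "\<dots> = 2 * (\<Sum>i\<in>UNIV. \<Sum>j\<in>UNIV. ?e i j * (x $ i * (x $ i - x $ j)))"
    by (subst (2) sum.swap) simp
  also have "\<dots> = 2 * (x \<bullet> (laplacian E *v x))"
    by (simp add: inner_vec_def laplacian_mult_vector_nth[OF graph] sum_distrib_left mult_ac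
        del: sum_of_bool_mult_eq)
  finally show ?thesis by simp
qed

lemma psd_laplacian:
  assumes graph: "undirected_simple_graph E"
  shows "psd (laplacian E)"
  unfolding psd_def
proof
  show "transpose (laplacian E) = laplacian E"
    using graph unfolding undirected_simple_graph_def transpose_def laplacian_def
    by (auto simp: vec_eq_iff)
  show "\<forall>x. 0 \<le> x \<bullet> (laplacian E *v x)"
    by (simp add: laplacian_quadratic_form[OF graph] sum_nonneg)
qed

section \<open>Kronecker products with the identity\<close>

lemma sum_kron_I:
  "(\<Sum>i\<in>UNIV. kron_I M v $ i) = (\<Sum>j\<in>UNIV. (\<Sum>i\<in>UNIV. M $ i $ j) *\<^sub>R v $ j)"
  unfolding kron_I_def by (simp add: scaleR_sum_left) (rule sum.swap)

lemma kron_I_kron_I: "kron_I M (kron_I N v) = kron_I (M ** N) v"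
proof -
  have "(\<Sum>j\<in>UNIV. M $ i $ j *\<^sub>R (\<Sum>k\<in>UNIV. N $ j $ k *\<^sub>R v $ k)) =
        (\<Sum>k\<in>UNIV. (\<Sum>j\<in>UNIV. M $ i $ j * N $ j $ k) *\<^sub>R v $ k)" for i
    by (simp add: scaleR_sum_right scaleR_sum_left) (rule sum.swap)
  then show ?thesis unfolding kron_I_def matrix_matrix_mult_def by (simp add: vec_eq_iff)
qed

lemma inner_kron_I_symmetric:
  assumes "transpose M = M"
  shows "w \<bullet> kron_I M v = kron_I M w \<bullet> v"
proof -
  have M: "M $ i $ j = M $ j $ i" for i j
    using assms unfolding transpose_def by (metis vec_lambda_beta)
  have "w \<bullet> kron_I M v = (\<Sum>i\<in>UNIV. \<Sum>j\<in>UNIV. M $ i $ j * (w $ i \<bullet> v $ j))"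
    unfolding kron_I_def inner_vec_def[of w] by (simp add: inner_sum_right)
  also have "\<dots> = (\<Sum>j\<in>UNIV. \<Sum>i\<in>UNIV. M $ j $ i * (w $ i \<bullet> v $ j))"
    by (subst sum.swap) (simp add: M)
  also have "\<dots> = kron_I M w \<bullet> v"
    unfolding kron_I_def inner_vec_def[of _ v] by (simp add: inner_sum_left)
  finally show ?thesis .
qed

lemma power2_norm_vec:
  fixes v :: "'a::real_inner^'n"
  shows "(norm v)\<^sup>2 = (\<Sum>i\<in>UNIV. (norm (v $ i))\<^sup>2)"
  by (simp add: power2_norm_eq_inner inner_vec_def)

lemma norm_kron_I_le: "norm (kron_I M v) \<le> spec_norm M * norm v"
proof -
  define s where "s = spec_norm M"
  have "0 \<le> s"
    unfolding s_def spec_norm_def by (rule onorm_pos_le[OF matrix_vector_mul_bounded_linear])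
  have M: "norm (M *v c) \<le> s * norm c" for c
    unfolding s_def spec_norm_def by (rule onorm[OF matrix_vector_mul_bounded_linear])
  \<comment> \<open>M \<otimes> I acts on each of the n coordinate slices separately\<close>
  define col where "col k = (\<chi> j. v $ j $ k)" for k
  have "kron_I M v $ i $ k = (M *v col k) $ i" for i k
    unfolding kron_I_def matrix_vector_mult_def col_def by (simp add: sum_component)
  then have "(norm (kron_I M v))\<^sup>2 = (\<Sum>i\<in>UNIV. \<Sum>k\<in>UNIV. ((M *v col k) $ i)\<^sup>2)"
    by (simp add: power2_norm_vec)
  also have "\<dots> = (\<Sum>k\<in>UNIV. (norm (M *v col k))\<^sup>2)"
    by (subst sum.swap) (simp add: power2_norm_vec)
  also have "\<dots> \<le> (\<Sum>k\<in>UNIV. (s * norm (col k))\<^sup>2)"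
    by (intro sum_mono power_mono M) simp
  also have "\<dots> = s\<^sup>2 * (\<Sum>k\<in>UNIV. \<Sum>j\<in>UNIV. (v $ j $ k)\<^sup>2)"
    by (simp add: power_mult_distrib sum_distrib_left power2_norm_vec col_def)
  also have "\<dots> = (s * norm v)\<^sup>2"
    by (subst sum.swap) (simp add: power_mult_distrib power2_norm_vec)
  finally have "(norm (kron_I M v))\<^sup>2 \<le> (s * norm v)\<^sup>2" .
  then show ?thesis
    using \<open>0 \<le> s\<close> unfolding s_def by (meson mult_nonneg_nonneg norm_ge_zero power2_le_imp_le)
qed

section \<open>Descent of the Laplacian-preconditioned gradient iteration\<close>

lemma lipschitz_gradient_upper_bound:
  fixes f :: "'a::real_inner \<Rightarrow> real"
  assumes grad: "\<And>x. (f has_derivative (\<lambda>h. g x \<bullet> h)) (at x)"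
    and lip: "\<And>x y. norm (g x - g y) \<le> L * dist x y"
  shows "f y \<le> f x + g x \<bullet> (y - x) + L / 2 * (norm (y - x))\<^sup>2"
proof -
  define d where "d = y - x"
  \<comment> \<open>the gap to the quadratic model is non-increasing along the segment from x to y\<close>
  define \<psi> where "\<psi> t = f (x + t *\<^sub>R d) - t * (g x \<bullet> d) - L / 2 * t\<^sup>2 * (norm d)\<^sup>2" for t
  have "\<psi> 1 \<le> \<psi> 0"
  proof (rule DERIV_nonpos_imp_nonincreasing[of 0 1])
    fix t :: real assume t: "0 \<le> t" "t \<le> 1"
    have "((\<lambda>t. x + t *\<^sub>R d) has_derivative (\<lambda>s. s *\<^sub>R d)) (at t)"
      by (auto intro!: derivative_eq_intros)
    from has_derivative_compose[OF this grad]
    have "((\<lambda>t. f (x + t *\<^sub>R d)) has_derivative (\<lambda>s. g (x + t *\<^sub>R d) \<bullet> (s *\<^sub>R d))) (at t)"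
      by (simp add: o_def)
    then have "((\<lambda>t. f (x + t *\<^sub>R d)) has_real_derivative g (x + t *\<^sub>R d) \<bullet> d) (at t)"
      by (simp add: has_field_derivative_def mult_commute_abs)
    then have D: "(\<psi> has_real_derivative (g (x + t *\<^sub>R d) - g x) \<bullet> d - L * t * (norm d)\<^sup>2) (at t)"
      unfolding \<psi>_def
      by (auto intro!: derivative_eq_intros simp: inner_diff_left algebra_simps)
    have "(g (x + t *\<^sub>R d) - g x) \<bullet> d \<le> norm (g (x + t *\<^sub>R d) - g x) * norm d"
      by (rule norm_cauchy_schwarz)
    also have "\<dots> \<le> L * t * (norm d)\<^sup>2"
      using mult_right_mono[OF lip[of "x + t *\<^sub>R d" x] norm_ge_zero[of d]] t
      by (simp add: dist_norm power2_eq_square mult_ac)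
    finally show "\<exists>y. (\<psi> has_real_derivative y) (at t) \<and> y \<le> 0" using D by auto
  qed simp
  then show ?thesis unfolding \<psi>_def d_def by (simp add: algebra_simps)
qed

lemma coercive_bdd_below:
  fixes f :: "real^'n \<Rightarrow> real"
  assumes "coercive f" and cont: "continuous_on UNIV f"
  shows "bdd_below (range f)"
proof -
  obtain b where b: "\<And>x. b \<le> norm x \<Longrightarrow> 0 \<le> f x"
    using assms(1) unfolding coercive_def filterlim_at_top eventually_at_infinity by blast
  have "bounded (f ` cball 0 b)"
    by (intro compact_imp_bounded compact_continuous_image continuous_on_subset[OF cont]) auto
  then obtain B where B: "\<And>x. x \<in> cball 0 b \<Longrightarrow> B \<le> f x"
    by (metis bdd_below.E bounded_imp_bdd_below imageI)
  have "min B 0 \<le> f x" for x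
    using b[of x] B[of x] by (cases "norm x \<le> b") (auto simp: min_le_iff_disj)
  then show ?thesis by (rule bdd_belowI2)
qed

lemma separable_lipschitz_gradient_upper_bound:
  fixes f :: "'m::finite \<Rightarrow> 'a::real_inner \<Rightarrow> real"
  assumes grad: "\<And>i x. (f i has_derivative (\<lambda>h. g i x \<bullet> h)) (at x)"
    and lip: "\<And>i x y. norm (g i x - g i y) \<le> L * dist x y"
  shows "(\<Sum>i\<in>UNIV. f i (y $ i)) \<le>
    (\<Sum>i\<in>UNIV. f i (x $ i)) + (\<chi> i. g i (x $ i)) \<bullet> (y - x) + L / 2 * (norm (y - x))\<^sup>2"
proof -
  have "(\<Sum>i\<in>UNIV. f i (y $ i)) \<le>
      (\<Sum>i\<in>UNIV. f i (x $ i) + g i (x $ i) \<bullet> (y $ i - x $ i) + L / 2 * (norm (y $ i - x $ i))\<^sup>2)"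
    by (intro sum_mono lipschitz_gradient_upper_bound grad lip)
  then show ?thesis
    by (simp add: sum.distrib sum_distrib_left inner_vec_def power2_norm_vec)
qed

lemma kron_I_gradient_step_descent:
  fixes f :: "'m::finite \<Rightarrow> real^'n \<Rightarrow> real" and S :: "real^'m^'m" and \<theta> :: "real^'n^'m"
  assumes grad: "\<And>i x. (f i has_derivative (\<lambda>h. g i x \<bullet> h)) (at x)"
    and lip: "\<And>i x y. norm (g i x - g i y) \<le> L * dist x y"
    and sym: "transpose S = S" and "0 \<le> \<alpha>" "0 \<le> L" and step: "\<alpha> * ((spec_norm S)\<^sup>2 * L) \<le> 1"
  defines "G \<equiv> \<chi> i. g i (\<theta> $ i)"
  shows "(\<Sum>i\<in>UNIV. f i ((\<theta> - \<alpha> *\<^sub>R kron_I (S ** S) G) $ i)) + \<alpha> / 2 * (norm (kron_I S G))\<^sup>2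
    \<le> (\<Sum>i\<in>UNIV. f i (\<theta> $ i))"
proof -
  define u where "u = kron_I S G"
  define d where "d = - (\<alpha> *\<^sub>R kron_I S u)"
  have update: "\<theta> - \<alpha> *\<^sub>R kron_I (S ** S) G = \<theta> + d"
    unfolding d_def u_def by (simp add: kron_I_kron_I)
  have descent: "(\<Sum>i\<in>UNIV. f i ((\<theta> + d) $ i)) \<le>
      (\<Sum>i\<in>UNIV. f i (\<theta> $ i)) + G \<bullet> d + L / 2 * (norm d)\<^sup>2"
    using separable_lipschitz_gradient_upper_bound[OF grad lip, where y = "\<theta> + d" and x = \<theta>]
    unfolding G_def by simp
  have inner: "G \<bullet> d = - \<alpha> * (norm u)\<^sup>2"
    unfolding d_def u_def using inner_kron_I_symmetric[OF sym, of G]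
    by (simp add: power2_norm_eq_inner)
  have quadratic: "L / 2 * (norm d)\<^sup>2 \<le> \<alpha> / 2 * (norm u)\<^sup>2"
  proof -
    have "norm d \<le> \<alpha> * (spec_norm S * norm u)"
      unfolding d_def using norm_kron_I_le[of S u] \<open>0 \<le> \<alpha>\<close> by (simp add: mult_left_mono)
    then have "L / 2 * (norm d)\<^sup>2 \<le> L / 2 * (\<alpha> * (spec_norm S * norm u))\<^sup>2"
      using \<open>0 \<le> L\<close> by (intro mult_left_mono power_mono) simp_all
    also have "\<dots> = (\<alpha> * ((spec_norm S)\<^sup>2 * L)) * (\<alpha> / 2 * (norm u)\<^sup>2)"
      by (simp add: power2_eq_square)
    also have "\<dots> \<le> \<alpha> / 2 * (norm u)\<^sup>2"
      using step \<open>0 \<le> \<alpha>\<close> \<open>0 \<le> L\<close> by (intro mult_left_le_one_le) auto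
    finally show ?thesis .
  qed
  show ?thesis
    unfolding update using descent inner quadratic unfolding u_def by linarith
qed

lemma sufficient_decrease_imp_tendsto_zero:
  fixes F a :: "nat \<Rightarrow> real"
  assumes decrease: "\<And>k. F (Suc k) + c * a k \<le> F k"
    and bound: "\<And>k. B \<le> F k" and "0 < c" and nonneg: "\<And>k. 0 \<le> a k"
  shows "a \<longlonglongrightarrow> 0"
proof -
  have telescope: "F N + c * (\<Sum>k<N. a k) \<le> F 0" for N
  proof (induction N)
    case (Suc N)
    then show ?case using decrease[of N] by (simp add: algebra_simps)
  qed simp
  have "summable a"
  proof (rule summableI_nonneg_bounded)
    show "(\<Sum>k<N. a k) \<le> (F 0 - B) / c" for N
      using telescope[of N] bound[of N] \<open>0 < c\<close> by (simp add: field_simps)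
  qed (rule nonneg)
  then show ?thesis by (rule summable_LIMSEQ_zero)
qed

lemma kron_I_iteration_sum_invariant:
  fixes M :: "real^'m::finite^'m" and \<theta> :: "nat \<Rightarrow> real^'n^'m"
  assumes columns: "\<And>j. (\<Sum>i\<in>UNIV. M $ i $ j) = 0"
    and iter: "\<And>k. \<theta> (Suc k) = \<theta> k - \<alpha> *\<^sub>R kron_I M (v k)"
  shows "(\<Sum>i\<in>UNIV. \<theta> k $ i) = (\<Sum>i\<in>UNIV. \<theta> 0 $ i)"
proof (induction k)
  case (Suc k)
  have "(\<Sum>i\<in>UNIV. \<theta> (Suc k) $ i) = (\<Sum>i\<in>UNIV. \<theta> k $ i) - \<alpha> *\<^sub>R (\<Sum>i\<in>UNIV. kron_I M (v k) $ i)"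
    unfolding iter by (simp add: sum_subtractf scaleR_sum_right)
  then show ?case using Suc.IH by (simp add: sum_kron_I columns)
qed simp

theorem proposition2:
  fixes f :: "'m::finite \<Rightarrow> real^'n::finite \<Rightarrow> real"
    and g :: "'m \<Rightarrow> real^'n \<Rightarrow> real^'n"
    and H :: "'m \<Rightarrow> real^'n \<Rightarrow> real^'n^'n"
    and Lg LH :: "'m \<Rightarrow> real"
    and E :: "'m \<Rightarrow> 'm \<Rightarrow> bool"
    and r :: "real^'n"
    and \<theta> :: "nat \<Rightarrow> real^'n^'m"
    and \<alpha> :: real
  assumes m2: "CARD('m) \<ge> 2"
    and smooth: "\<And>i. smooth_fun (f i)"
    and grad: "\<And>i x. (f i has_derivative (\<lambda>h. g i x \<bullet> h)) (at x)"
    and hess: "\<And>i x. (g i has_derivative (\<lambda>h. H i x *v h)) (at x)"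
    and lip_grad: "\<And>i x y. norm (g i x - g i y) \<le> Lg i * dist x y"
    and lip_hess: "\<And>i x y. spec_norm (H i x - H i y) \<le> LH i * dist x y"
    and coer: "\<And>i. coercive (f i)"
    and graph: "undirected_simple_graph E"
    and conn: "graph_connected E"
    and init: "(\<Sum>i\<in>UNIV. \<theta> 0 $ i) = r"
    and alpha_pos: "0 < \<alpha>"
    and alpha_le: "\<alpha> \<le> 1 / ((spec_norm (psd_sqrt (laplacian E)))\<^sup>2 * Max (range Lg))"
    and iter: "\<And>k. \<theta> (Suc k) = \<theta> k - \<alpha> *\<^sub>R kron_I (laplacian E) (\<chi> i. g i (\<theta> k $ i))"
  shows "(\<forall>k. (\<Sum>i\<in>UNIV. \<theta> k $ i) = r) \<and>
         (\<lambda>k. norm (kron_I (psd_sqrt (laplacian E)) (\<chi> i. g i (\<theta> k $ i)))) \<longlonglongrightarrow> 0"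
proof -
  define S where "S = psd_sqrt (laplacian E)"
  define Lmax where "Lmax = Max (range Lg)"
  define u where "u k = kron_I S (\<chi> i. g i (\<theta> k $ i))" for k
  have S: "psd S" "S ** S = laplacian E"
    unfolding S_def using psd_psd_sqrt psd_sqrt_mult_self psd_laplacian[OF graph] by auto
  have lip: "norm (g i x - g i y) \<le> Lmax * dist x y" for i x y
    using lip_grad[of i x y] mult_right_mono[of "Lg i" Lmax "dist x y"]
    unfolding Lmax_def by (simp add: order_trans)
  have "0 < 1 / ((spec_norm S)\<^sup>2 * Lmax)"
    using alpha_pos alpha_le unfolding S_def Lmax_def by linarith
  then have "0 < (spec_norm S)\<^sup>2 * Lmax" by (simp add: zero_less_divide_1_iff)
  then have "0 < Lmax" and step: "\<alpha> * ((spec_norm S)\<^sup>2 * Lmax) \<le> 1"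
    using alpha_le unfolding S_def Lmax_def by (auto simp: zero_less_mult_iff le_divide_eq)
  define F where "F k = (\<Sum>i\<in>UNIV. f i (\<theta> k $ i))" for k
  have "F (Suc k) + \<alpha> / 2 * (norm (u k))\<^sup>2 \<le> F k" for k
    unfolding F_def u_def iter S(2)[symmetric]
    using kron_I_gradient_step_descent[OF grad lip _ _ _ step] S(1) alpha_pos \<open>0 < Lmax\<close>
    unfolding psd_def by simp
  moreover have "continuous_on UNIV (f i)" for i
    using has_derivative_continuous[OF grad] by (intro continuous_at_imp_continuous_on) auto
  then have "(\<Sum>i\<in>UNIV. INF x. f i x) \<le> F k" for k
    unfolding F_def using coercive_bdd_below[OF coer] by (intro sum_mono cINF_lower) auto
  ultimately have "(\<lambda>k. (norm (u k))\<^sup>2) \<longlonglongrightarrow> 0"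
    using alpha_pos by (intro sufficient_decrease_imp_tendsto_zero[where F = F and c = "\<alpha> / 2"]) auto
  then have "(\<lambda>k. norm (u k)) \<longlonglongrightarrow> 0"
    using tendsto_real_sqrt by fastforce
  moreover have "(\<Sum>i\<in>UNIV. \<theta> k $ i) = r" for k
    using kron_I_iteration_sum_invariant[where v = "\<lambda>k. \<chi> i. g i (\<theta> k $ i)",
        OF laplacian_column_sum[OF graph] iter] init by simp
  ultimately show ?thesis unfolding u_def S_def by simp
qed

end
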